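(* Let $(X,d)$ be a compact metric space and let $f_1,f_2:X\to X$ be continuous. Suppose there is $c\in X$ with $f_1(x)=c$ for all $x\in X$, $f_2(c)=c$, and $f_2$ is Kato chaotic. Then the multiple mapping $F=\{f_1,f_2\}$ is (Hausdorff metric) Kato chaotic.
   Context: A continuous $f:X\to X$ is sensitive if there is $\delta>0$ such that for every nonempty open $U\subset X$ there exist $x,y\in U$, $n\in\mathbb{Z}^+$ with $d(f^n(x),f^n(y))>\delta$; accessible if for every $\epsilon>0$ and all nonempty open $U,V\subset X$ there exist $x\in U,y\in V,n\in\mathbb{Z}^+$ with $d(f^n(x),f^n(y))<\epsilon$; Kato chaotic if sensitive and accessible. For $F=\{f_1,f_2\}$ and $n\ge1$, $F^n(x)=\{f_{i_1}\cdots f_{i_n}(x)\mid i_1,\dots,i_n\in\{1,2\}\}$, and $d_H(A,B)=\max\{\sup_{a\in A}\inf_{b\in B}d(a,b),\sup_{b\in B}\inf_{a\in A}d(a,b)\}$ is the Hausdorff metric. $F$ is (Hausdorff metric) sensitive, resp. accessible, if the same definitions hold with $d(f^n(x),f^n(y))$ replaced by $d_H(F^n(x),F^n(y))$; $F$ is (Hausdorff metric) Kato chaotic if it is both. Here $\mathbb{Z}^+=\{1,2,\dots\}$. *)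

theory Defs
  imports "HOL-Analysis.Analysis"
begin

definition hausdorff_dist :: "'a::metric_space set \<Rightarrow> 'a set \<Rightarrow> real" where
  "hausdorff_dist A B =
     max (SUP a\<in>A. INF b\<in>B. dist a b) (SUP b\<in>B. INF a\<in>A. dist a b)"

definition sensitive :: "'a::metric_space set \<Rightarrow> ('a \<Rightarrow> 'a) \<Rightarrow> bool" where
  "sensitive X f \<longleftrightarrow> (\<exists>\<delta>>0. \<forall>U. openin (top_of_set X) U \<and> U \<noteq> {} \<longrightarrow>
      (\<exists>x\<in>U. \<exists>y\<in>U. \<exists>n\<ge>1. dist ((f ^^ n) x) ((f ^^ n) y) > \<delta>))"

definition accessible :: "'a::metric_space set \<Rightarrow> ('a \<Rightarrow> 'a) \<Rightarrow> bool" where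
  "accessible X f \<longleftrightarrow> (\<forall>\<epsilon>>0. \<forall>U V. openin (top_of_set X) U \<and> U \<noteq> {} \<and>
      openin (top_of_set X) V \<and> V \<noteq> {} \<longrightarrow>
      (\<exists>x\<in>U. \<exists>y\<in>V. \<exists>n\<ge>1. dist ((f ^^ n) x) ((f ^^ n) y) < \<epsilon>))"

definition kato_chaotic :: "'a::metric_space set \<Rightarrow> ('a \<Rightarrow> 'a) \<Rightarrow> bool" where
  "kato_chaotic X f \<longleftrightarrow> sensitive X f \<and> accessible X f"

fun multi_iter :: "('a \<Rightarrow> 'a) set \<Rightarrow> nat \<Rightarrow> 'a \<Rightarrow> 'a set" where
  "multi_iter F 0 x = {x}"
| "multi_iter F (Suc n) x = (\<Union>f\<in>F. f ` multi_iter F n x)"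

definition multi_sensitive :: "'a::metric_space set \<Rightarrow> ('a \<Rightarrow> 'a) set \<Rightarrow> bool" where
  "multi_sensitive X F \<longleftrightarrow> (\<exists>\<delta>>0. \<forall>U. openin (top_of_set X) U \<and> U \<noteq> {} \<longrightarrow>
      (\<exists>x\<in>U. \<exists>y\<in>U. \<exists>n\<ge>1.
         hausdorff_dist (multi_iter F n x) (multi_iter F n y) > \<delta>))"

definition multi_accessible :: "'a::metric_space set \<Rightarrow> ('a \<Rightarrow> 'a) set \<Rightarrow> bool" where
  "multi_accessible X F \<longleftrightarrow> (\<forall>\<epsilon>>0. \<forall>U V. openin (top_of_set X) U \<and> U \<noteq> {} \<and>
      openin (top_of_set X) V \<and> V \<noteq> {} \<longrightarrow>
      (\<exists>x\<in>U. \<exists>y\<in>V. \<exists>n\<ge>1.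
         hausdorff_dist (multi_iter F n x) (multi_iter F n y) < \<epsilon>))"

definition multi_kato_chaotic :: "'a::metric_space set \<Rightarrow> ('a \<Rightarrow> 'a) set \<Rightarrow> bool" where
  "multi_kato_chaotic X F \<longleftrightarrow> multi_sensitive X F \<and> multi_accessible X F"

end

theory Submission
  imports Defs
begin

text \<open>For \<open>n \<ge> 1\<close> the constant map sends every point to \<open>c\<close>, and \<open>c\<close> is fixed by both maps,
  so \<open>F\<^sup>n(x) = {f\<^sub>2\<^sup>n(x), c}\<close>. The Hausdorff distance between \<open>{a, c}\<close> and \<open>{b, c}\<close> lies between
  \<open>d(a, b)/2\<close> and \<open>d(a, b)\<close>, the lower bound by the triangle inequality through \<open>c\<close>.
  Hence sensitivity of \<open>f\<^sub>2\<close> passes to \<open>F\<close> with half the constant, and accessibility passes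
  to \<open>F\<close> unchanged.\<close>

lemma hausdorff_dist_pair_common_point:
  "hausdorff_dist {a, c} {b, c} =
     max (min (dist a b) (dist a c)) (min (dist a b) (dist b c))"
  unfolding hausdorff_dist_def
  by (simp add: dist_commute cSup_insert cInf_insert sup_max inf_min del: max_min_same)

lemma hausdorff_dist_pair_common_point_le: "hausdorff_dist {a, c} {b, c} \<le> dist a b"
  unfolding hausdorff_dist_pair_common_point by simp

lemma hausdorff_dist_pair_common_point_ge: "dist a b \<le> 2 * hausdorff_dist {a, c} {b, c}"
proof -
  have "dist a b \<le> dist a c + dist b c"
    by (metis dist_commute dist_triangle)
  then show ?thesis
    unfolding hausdorff_dist_pair_common_point max_def min_def by auto
qed

lemma funpow_in_invariant_set:
  assumes "g ` X \<subseteq> X" and "x \<in> X"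
  shows "(g ^^ n) x \<in> X"
  by (induction n) (use assms in auto)

lemma multi_iter_constant_and_fixing:
  assumes const: "\<forall>x\<in>X. f1 x = c" and fixed: "f2 c = c" and "c \<in> X"
    and invariant: "f2 ` X \<subseteq> X" and "x \<in> X"
  shows "multi_iter {f1, f2} (Suc n) x = {(f2 ^^ Suc n) x, c}"
proof (induction n)
  case 0
  show ?case using const \<open>x \<in> X\<close> by auto
next
  case (Suc n)
  have "(f2 ^^ Suc n) x \<in> X"
    using funpow_in_invariant_set[OF invariant \<open>x \<in> X\<close>] .
  then show ?case
    using const fixed \<open>c \<in> X\<close> by (simp only: multi_iter.simps(2)[of _ "Suc n"] Suc.IH) auto
qed

lemma sensitive_imp_multi_sensitive:
  assumes orbit: "\<And>x n. x \<in> X \<Longrightarrow> n \<ge> 1 \<Longrightarrow> multi_iter F n x = {(g ^^ n) x, c}"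
    and "sensitive X g"
  shows "multi_sensitive X F"
proof -
  obtain \<delta> where "\<delta> > 0" and sens: "\<And>U. openin (top_of_set X) U \<and> U \<noteq> {} \<Longrightarrow>
      \<exists>x\<in>U. \<exists>y\<in>U. \<exists>n\<ge>1. dist ((g ^^ n) x) ((g ^^ n) y) > \<delta>"
    using \<open>sensitive X g\<close> unfolding sensitive_def by blast
  have "\<exists>x\<in>U. \<exists>y\<in>U. \<exists>n\<ge>1. hausdorff_dist (multi_iter F n x) (multi_iter F n y) > \<delta> / 2"
    if U: "openin (top_of_set X) U \<and> U \<noteq> {}" for U
  proof -
    obtain x y n where "x \<in> U" "y \<in> U" "n \<ge> 1" and far: "dist ((g ^^ n) x) ((g ^^ n) y) > \<delta>"
      using sens[OF U] by blast
    moreover have "x \<in> X" "y \<in> X"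
      using \<open>x \<in> U\<close> \<open>y \<in> U\<close> U openin_imp_subset by blast+
    ultimately have "hausdorff_dist (multi_iter F n x) (multi_iter F n y) > \<delta> / 2"
      using orbit hausdorff_dist_pair_common_point_ge[of "(g ^^ n) x" "(g ^^ n) y" c]
      by fastforce
    then show ?thesis
      using \<open>x \<in> U\<close> \<open>y \<in> U\<close> \<open>n \<ge> 1\<close> by blast
  qed
  then show ?thesis
    unfolding multi_sensitive_def using \<open>\<delta> > 0\<close> half_gt_zero by blast
qed

lemma accessible_imp_multi_accessible:
  assumes orbit: "\<And>x n. x \<in> X \<Longrightarrow> n \<ge> 1 \<Longrightarrow> multi_iter F n x = {(g ^^ n) x, c}"
    and "accessible X g"
  shows "multi_accessible X F"
  unfolding multi_accessible_def
proof (intro allI impI)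
  fix \<epsilon> :: real and U V
  assume "\<epsilon> > 0" and UV: "openin (top_of_set X) U \<and> U \<noteq> {} \<and>
      openin (top_of_set X) V \<and> V \<noteq> {}"
  obtain x y n where "x \<in> U" "y \<in> V" "n \<ge> 1" and close: "dist ((g ^^ n) x) ((g ^^ n) y) < \<epsilon>"
    using \<open>accessible X g\<close> \<open>\<epsilon> > 0\<close> UV unfolding accessible_def by blast
  moreover have "x \<in> X" "y \<in> X"
    using \<open>x \<in> U\<close> \<open>y \<in> V\<close> UV openin_imp_subset by blast+
  ultimately have "hausdorff_dist (multi_iter F n x) (multi_iter F n y) < \<epsilon>"
    using orbit hausdorff_dist_pair_common_point_le[of "(g ^^ n) x" c "(g ^^ n) y"]
    by fastforce
  then show "\<exists>x\<in>U. \<exists>y\<in>V. \<exists>n\<ge>1. hausdorff_dist (multi_iter F n x) (multi_iter F n y) < \<epsilon>"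
    using \<open>x \<in> U\<close> \<open>y \<in> V\<close> \<open>n \<ge> 1\<close> by blast
qed

theorem corollary3p12:
  fixes X :: "'a::metric_space set" and f1 f2 :: "'a \<Rightarrow> 'a" and c :: 'a
  assumes "compact X"
    and "continuous_on X f1" and "f1 ` X \<subseteq> X"
    and "continuous_on X f2" and "f2 ` X \<subseteq> X"
    and "c \<in> X" and "\<forall>x\<in>X. f1 x = c" and "f2 c = c"
    and "kato_chaotic X f2"
  shows "multi_kato_chaotic X {f1, f2}"
proof -
  have orbit: "multi_iter {f1, f2} n x = {(f2 ^^ n) x, c}" if "x \<in> X" "n \<ge> 1" for x n
  proof -
    obtain m where "n = Suc m" using \<open>n \<ge> 1\<close> by (cases n) auto
    then show ?thesis
      using multi_iter_constant_and_fixing[OF assms(7,8,6,5) \<open>x \<in> X\<close>] by simp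
  qed
  show ?thesis
    using assms(9) sensitive_imp_multi_sensitive[OF orbit] accessible_imp_multi_accessible[OF orbit]
    unfolding kato_chaotic_def multi_kato_chaotic_def by blast
qed

end
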